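(* Let $A>0$, $B\in\mathbb R$, $0<E<|B|$ and $z_\gamma\in\mathbb R\setminus\{0\}$. The set $$\left\{\frac{\sqrt{4\pi A\ell(\pi A\ell-z_\gamma)}}{\sqrt{B^2/E^2-1}}:\ \ell\in\mathbb Z\setminus\{0\},\ \frac{2E}{E-|B|}<\frac{z_\gamma}{\pi A\ell}<\frac{2E}{E+|B|}\right\}$$ is bounded below by $|z_\gamma|$.
   Context: This set is the set of lengths of non-central closed magnetic geodesics of energy $E$ in the free homotopy class of a central element $\exp(z_\gamma Z)$ of a compact quotient of the three-dimensional Heisenberg group with metric parameter $A$ and magnetic parameter $B$; the claim is purely about the displayed set of real numbers. *)

theory Defs
  imports "HOL-Analysis.Analysis"
begin

end

theory Submission
  imports Defs
begin

text \<open>Write \<open>u = z / (\<pi> A \<ell>)\<close> and \<open>b = \<bar>B\<bar>\<close>. The window on \<open>u\<close> says exactly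
  \<open>\<bar>u b\<bar> < (2 - u) E\<close>; squaring gives \<open>u\<^sup>2 (b\<^sup>2 - E\<^sup>2) \<le> 4 E\<^sup>2 (1 - u)\<close>, and multiplying
  by \<open>(\<pi> A \<ell>)\<^sup>2 / E\<^sup>2\<close> turns this into \<open>z\<^sup>2 (B\<^sup>2/E\<^sup>2 - 1) \<le> 4 \<pi> A \<ell> (\<pi> A \<ell> - z)\<close>,
  which is the squared claim.\<close>

lemma abs_mult_le_of_window:
  fixes e b u :: real
  assumes "0 < e" "e < b" "2 * e / (e - b) < u" "u < 2 * e / (e + b)"
  shows "\<bar>u * b\<bar> \<le> (2 - u) * e"
proof -
  have "u * (e + b) < 2 * e" using assms(1,2,4) by (simp add: less_divide_eq)
  moreover have "u * (e - b) < 2 * e" using assms(1-3) by (simp add: divide_less_eq)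
  ultimately show ?thesis by (simp add: algebra_simps abs_le_iff)
qed

lemma square_bound_of_window:
  fixes e b u :: real
  assumes "0 < e" "e < b" "2 * e / (e - b) < u" "u < 2 * e / (e + b)"
  shows "u\<^sup>2 * (b\<^sup>2 - e\<^sup>2) \<le> 4 * e\<^sup>2 * (1 - u)"
proof -
  have "\<bar>u * b\<bar>\<^sup>2 \<le> ((2 - u) * e)\<^sup>2"
    using abs_mult_le_of_window[OF assms] by (intro power_mono) simp_all
  then show ?thesis by (simp add: power2_eq_square algebra_simps)
qed

lemma square_bound_of_window_quotient:
  fixes e b t z :: real
  assumes "t \<noteq> 0" "0 < e" "e < b"
    and "2 * e / (e - b) < z / t" "z / t < 2 * e / (e + b)"
  shows "z\<^sup>2 * (b\<^sup>2 / e\<^sup>2 - 1) \<le> 4 * t * (t - z)"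
proof -
  define u where "u = z / t"
  have z: "z = u * t" using assms(1) by (simp add: u_def)
  have "z\<^sup>2 * (b\<^sup>2 / e\<^sup>2 - 1) = (t\<^sup>2 / e\<^sup>2) * (u\<^sup>2 * (b\<^sup>2 - e\<^sup>2))"
    using assms(2) by (simp add: z field_simps power2_eq_square)
  also have "\<dots> \<le> (t\<^sup>2 / e\<^sup>2) * (4 * e\<^sup>2 * (1 - u))"
    using square_bound_of_window[OF assms(2,3)] assms(4,5)
    by (intro mult_left_mono) (simp_all add: u_def)
  also have "\<dots> = 4 * t * (t - z)"
    using assms(2) by (simp add: z field_simps power2_eq_square)
  finally show ?thesis .
qed

lemma abs_le_sqrt_divide_of_square_le:
  fixes z c y :: real
  assumes "0 < c" "z\<^sup>2 * c \<le> y"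
  shows "\<bar>z\<bar> \<le> sqrt y / sqrt c"
proof -
  have "sqrt (z\<^sup>2) \<le> sqrt (y / c)"
    using assms by (intro real_sqrt_le_mono) (simp add: le_divide_eq)
  then show ?thesis by (simp add: real_sqrt_divide)
qed

theorem lemma4p15:
  fixes A B E z :: real
  assumes "A > 0" and "0 < E" and "E < \<bar>B\<bar>" and "z \<noteq> 0"
  shows "\<forall>x \<in> {sqrt (4 * pi * A * real_of_int l * (pi * A * real_of_int l - z))
                      / sqrt (B\<^sup>2 / E\<^sup>2 - 1) | l :: int.
                 l \<noteq> 0 \<and>
                 2 * E / (E - \<bar>B\<bar>) < z / (pi * A * real_of_int l) \<and>
                 z / (pi * A * real_of_int l) < 2 * E / (E + \<bar>B\<bar>)}.
           \<bar>z\<bar> \<le> x"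
proof (intro ballI)
  fix x assume "x \<in> {sqrt (4 * pi * A * real_of_int l * (pi * A * real_of_int l - z))
                      / sqrt (B\<^sup>2 / E\<^sup>2 - 1) | l :: int.
                 l \<noteq> 0 \<and>
                 2 * E / (E - \<bar>B\<bar>) < z / (pi * A * real_of_int l) \<and>
                 z / (pi * A * real_of_int l) < 2 * E / (E + \<bar>B\<bar>)}"
  then obtain l :: int where l: "l \<noteq> 0"
      "2 * E / (E - \<bar>B\<bar>) < z / (pi * A * real_of_int l)"
      "z / (pi * A * real_of_int l) < 2 * E / (E + \<bar>B\<bar>)"
    and x: "x = sqrt (4 * pi * A * real_of_int l * (pi * A * real_of_int l - z))
                  / sqrt (B\<^sup>2 / E\<^sup>2 - 1)"
    by blast
  have "pi * A * real_of_int l \<noteq> 0" using l(1) assms(1) by simp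
  from square_bound_of_window_quotient[OF this assms(2,3) l(2,3)]
  have "z\<^sup>2 * (B\<^sup>2 / E\<^sup>2 - 1) \<le> 4 * pi * A * real_of_int l * (pi * A * real_of_int l - z)"
    by (simp add: mult.assoc)
  moreover have "0 < B\<^sup>2 / E\<^sup>2 - 1"
    using assms(2,3) power_strict_mono[of E "\<bar>B\<bar>" 2] by simp
  ultimately show "\<bar>z\<bar> \<le> x"
    unfolding x by (intro abs_le_sqrt_divide_of_square_le)
qed

end
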